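(* Let $N>0$, $R=\mathbb{Q}[x_1,x_2,y_1,y_2]$, $w_2=(y_2^{N+1}-x_2^{N+1})/(y_2-x_2)$, and let $u_1,u_2\in R$ be homogeneous with $y_1^{N+1}+y_2^{N+1}-x_1^{N+1}-x_2^{N+1}=u_1(y_1+y_2-x_1-x_2)+u_2(y_1y_2-x_1x_2)$ and $u_i(y_1,y_2,x_1,x_2)=u_i(x_1,x_2,y_1,y_2)$. Let $\gamma=\frac{\partial u_1}{\partial y_1}-\frac{\partial u_1}{\partial y_2}-\frac12\frac{\partial u_2}{\partial y_2}(x_2+y_2)+\frac12\frac{\partial u_2}{\partial y_1}(x_1+y_1)$ and let $\Omega_2(\gamma)$ be the unique polynomial solution $z$ of $2z+\frac{\partial z}{\partial y_1}(y_1-x_1)+\frac{\partial z}{\partial y_2}(y_2-x_2)=\gamma$. Then $u_1+y_1u_2-w_2$ is divisible by $x_1-y_1$ in $R$, and $\Omega_2(\gamma)=-a_2$, where $a_2=\frac12u_2+\frac{u_1+y_1u_2-w_2}{x_1-y_1}$. *)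

theory Defs
  imports Complex_Main "HOL-Library.Poly_Mapping"
begin

text \<open>Multivariate polynomials over the rationals, in the style of the AFP MPoly
  development: a polynomial is a finitely supported map from monomials
  (finitely supported exponent vectors \<open>nat \<Rightarrow>\<^sub>0 nat\<close>) to rational coefficients.
  Variable indices: 0 = x1, 1 = x2, 2 = y1, 3 = y2.\<close>

type_synonym mpoly = "(nat \<Rightarrow>\<^sub>0 nat) \<Rightarrow>\<^sub>0 rat"

definition Var :: "nat \<Rightarrow> mpoly" where
  "Var i = Poly_Mapping.single (Poly_Mapping.single i 1) 1"

definition Const :: "rat \<Rightarrow> mpoly" where
  "Const c = Poly_Mapping.single 0 c"

definition inR :: "mpoly \<Rightarrow> bool" where
  "inR p \<longleftrightarrow> (\<forall>m \<in> Poly_Mapping.keys p. Poly_Mapping.keys m \<subseteq> {0..3})"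

definition mdeg :: "(nat \<Rightarrow>\<^sub>0 nat) \<Rightarrow> nat" where
  "mdeg m = (\<Sum>i\<in>Poly_Mapping.keys m. Poly_Mapping.lookup m i)"

definition homogeneous :: "mpoly \<Rightarrow> bool" where
  "homogeneous p \<longleftrightarrow> (\<exists>d. \<forall>m \<in> Poly_Mapping.keys p. mdeg m = d)"

definition pderiv_var :: "nat \<Rightarrow> mpoly \<Rightarrow> mpoly" where
  "pderiv_var i p = Abs_poly_mapping
     (\<lambda>m. of_nat (Poly_Mapping.lookup m i + 1) * Poly_Mapping.lookup p (m + Poly_Mapping.single i 1))"

definition swp :: "nat \<Rightarrow> nat" where
  "swp i = (if i = 0 then 2 else if i = 1 then 3 else if i = 2 then 0 else if i = 3 then 1 else i)"

definition swap_xy :: "mpoly \<Rightarrow> mpoly" where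
  "swap_xy p = Abs_poly_mapping
     (\<lambda>m. Poly_Mapping.lookup p (Abs_poly_mapping (\<lambda>i. Poly_Mapping.lookup m (swp i))))"

text \<open>w_2 = (y2^(N+1) - x2^(N+1)) / (y2 - x2) = sum_{k=0}^{N} y2^k x2^(N-k).\<close>
definition w2 :: "nat \<Rightarrow> mpoly" where
  "w2 N = (\<Sum>k\<le>N. Var 3 ^ k * Var 1 ^ (N - k))"

end

theory Submission
  imports Defs
begin

text \<open>Setting \<open>x1 = y1\<close> in the hypothesis leaves \<open>(u1 + y1 u2) (y2 - x2) = w2 (y2 - x2)\<close>, so
  \<open>x1 - y1\<close> divides \<open>u1 + y1 u2 - w2\<close>. Differentiating the hypothesis and the resulting
  division identity in \<open>y1\<close> and \<open>y2\<close> shows that \<open>-a2\<close> solves the equation defining \<open>\<Omega>\<^sub>2(\<gamma>)\<close>,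
  and the solution is unique because the operator on its left is injective.\<close>

abbreviation unit_monom :: "nat \<Rightarrow> (nat \<Rightarrow>\<^sub>0 nat)" where
  "unit_monom i \<equiv> Poly_Mapping.single i 1"

lemma poly_mapping_single_add_induct [case_names zero single_add]:
  assumes "P 0"
    and "\<And>f a b. a \<notin> Poly_Mapping.keys f \<Longrightarrow> b \<noteq> 0 \<Longrightarrow> P f \<Longrightarrow> P (Poly_Mapping.single a b + f)"
  shows "P (p :: 'a \<Rightarrow>\<^sub>0 'b::comm_monoid_add)"
proof (induction p rule: Poly_Mapping.update_induct)
  case const
  then show ?case using assms(1) by simp
next
  case (update f a b)
  have "Poly_Mapping.update a b f = Poly_Mapping.single a b + f"
    using update.hyps(1)
    by (intro poly_mapping_eqI)
       (auto simp: Poly_Mapping.lookup_update lookup_add lookup_single when_def in_keys_iff)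
  then show ?case using assms(2) update by simp
qed

lemma lookup_minus_nat:
  "Poly_Mapping.lookup (m - n) i = Poly_Mapping.lookup m i - Poly_Mapping.lookup (n :: 'a \<Rightarrow>\<^sub>0 nat) i"
  by (simp add: minus_poly_mapping.rep_eq)

lemma minus_unit_monom_add_unit_monom:
  "Poly_Mapping.lookup m i \<noteq> 0 \<Longrightarrow> m - unit_monom i + unit_monom i = m"
  by (intro poly_mapping_eqI) (auto simp: lookup_add lookup_minus_nat lookup_single when_def)

lemma add_unit_monom_neq_0: "m + unit_monom i \<noteq> 0"
  by (metis add_is_0 lookup_add lookup_single_eq lookup_zero one_neq_zero)

lemma Var_mult_single: "Var k * Poly_Mapping.single a b = Poly_Mapping.single (a + unit_monom k) b"
  by (simp add: Var_def mult_single add.commute)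

lemma lookup_Var_mult_add_unit_monom:
  "Poly_Mapping.lookup (Var k * p) (m + unit_monom k) = Poly_Mapping.lookup p m"
  by (induction p rule: poly_mapping_single_add_induct)
     (simp_all add: distrib_left Var_mult_single lookup_add lookup_single when_def)

lemma lookup_Var_mult_eq_0:
  "Poly_Mapping.lookup m k = 0 \<Longrightarrow> Poly_Mapping.lookup (Var k * p) m = 0"
proof (induction p rule: poly_mapping_single_add_induct)
  case zero
  then show ?case by simp
next
  case (single_add f a b)
  have "a + unit_monom k \<noteq> m"
    using single_add.prems by (auto simp: lookup_add)
  then show ?case
    using single_add by (simp add: distrib_left Var_mult_single lookup_add lookup_single)
qed

lemma lookup_Var_mult:
  "Poly_Mapping.lookup (Var k * p) m =
     (if Poly_Mapping.lookup m k = 0 then 0 else Poly_Mapping.lookup p (m - unit_monom k))"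
  using lookup_Var_mult_eq_0[of m k p] lookup_Var_mult_add_unit_monom[of k p "m - unit_monom k"]
    minus_unit_monom_add_unit_monom[of m k]
  by auto

lemma lookup_Const_mult: "Poly_Mapping.lookup (Const c * p) m = c * Poly_Mapping.lookup p m"
  by (induction p rule: poly_mapping_single_add_induct)
     (simp_all add: Const_def distrib_left mult_single lookup_add lookup_single when_def)

lemma Var_diff_neq_0: "i \<noteq> j \<Longrightarrow> Var i - Var j \<noteq> 0"
  by (metis Var_def lookup_single_eq lookup_single_not_eq one_neq_zero right_minus_eq)

lemma Const_half_add_Const_half: "Const (1/2) + Const (1/2) = 1"
  unfolding Const_def by (simp add: single_add[symmetric])

lemma Var_power: "Var i ^ k = Poly_Mapping.single (Poly_Mapping.single i k) 1"
  by (induction k) (simp_all add: Var_def mult_single single_add[symmetric])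

lemma lookup_pderiv_var:
  "Poly_Mapping.lookup (pderiv_var i p) m =
     of_nat (Poly_Mapping.lookup m i + 1) * Poly_Mapping.lookup p (m + unit_monom i)"
proof -
  have "{m. of_nat (Poly_Mapping.lookup m i + 1) * Poly_Mapping.lookup p (m + unit_monom i) \<noteq> (0::rat)}
      \<subseteq> (\<lambda>m. m + unit_monom i) -` Poly_Mapping.keys p"
    by (auto simp: in_keys_iff)
  moreover have "finite ((\<lambda>m. m + unit_monom i) -` Poly_Mapping.keys p)"
    by (rule finite_vimageI) (auto simp: inj_on_def)
  ultimately show ?thesis
    unfolding pderiv_var_def by (subst lookup_Abs_poly_mapping) (auto dest: finite_subset)
qed

lemma pderiv_var_add: "pderiv_var i (p + q) = pderiv_var i p + pderiv_var i q"
  by (intro poly_mapping_eqI) (simp add: lookup_pderiv_var lookup_add distrib_left)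

lemma pderiv_var_diff: "pderiv_var i (p - q) = pderiv_var i p - pderiv_var i q"
  by (intro poly_mapping_eqI) (simp add: lookup_pderiv_var lookup_minus right_diff_distrib)

lemma pderiv_var_uminus: "pderiv_var i (- p) = - pderiv_var i p"
  by (intro poly_mapping_eqI) (simp add: lookup_pderiv_var)

lemma pderiv_var_Const_mult: "pderiv_var i (Const c * p) = Const c * pderiv_var i p"
  by (intro poly_mapping_eqI) (simp add: lookup_pderiv_var lookup_Const_mult)

lemma pderiv_var_1: "pderiv_var i 1 = 0"
  by (intro poly_mapping_eqI)
     (simp add: lookup_pderiv_var lookup_one when_def add_unit_monom_neq_0[simplified])

lemma lookup_Var_mult_pderiv_var:
  "Poly_Mapping.lookup (Var k * pderiv_var k p) m = of_nat (Poly_Mapping.lookup m k) * Poly_Mapping.lookup p m"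
proof (cases "Poly_Mapping.lookup m k = 0")
  case False
  then have "Poly_Mapping.lookup (m - unit_monom k) k + 1 = Poly_Mapping.lookup m k"
    by (simp add: lookup_minus_nat)
  moreover have "m - unit_monom k + unit_monom k = m"
    using False by (rule minus_unit_monom_add_unit_monom)
  moreover note False
  ultimately show ?thesis
    by (simp only: lookup_Var_mult lookup_pderiv_var if_False)
qed (simp add: lookup_Var_mult)

lemma pderiv_var_Var_mult:
  "pderiv_var j (Var k * p) = (if j = k then p else 0) + Var k * pderiv_var j p"
proof (intro poly_mapping_eqI)
  fix m
  show "Poly_Mapping.lookup (pderiv_var j (Var k * p)) m =
        Poly_Mapping.lookup ((if j = k then p else 0) + Var k * pderiv_var j p) m"
  proof (cases "j = k")
    case True
    have "Poly_Mapping.lookup (pderiv_var k (Var k * p)) m =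
        of_nat (Poly_Mapping.lookup m k + 1) * Poly_Mapping.lookup p m"
      by (simp only: lookup_pderiv_var lookup_Var_mult_add_unit_monom)
    with True show ?thesis
      by (simp add: lookup_add lookup_Var_mult_pderiv_var algebra_simps)
  next
    case False
    moreover have "m + unit_monom j - unit_monom k = m - unit_monom k + unit_monom j"
      if "Poly_Mapping.lookup m k \<noteq> 0"
      using that False
      by (intro poly_mapping_eqI) (auto simp: lookup_add lookup_minus_nat lookup_single when_def)
    ultimately show ?thesis
      by (simp add: lookup_pderiv_var lookup_add lookup_Var_mult lookup_single lookup_minus_nat)
  qed
qed

lemma pderiv_var_Var: "pderiv_var j (Var k) = (if j = k then 1 else 0)"
  using pderiv_var_Var_mult[of j k 1] by (simp add: pderiv_var_1)

lemma pderiv_var_Var_power: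
  "pderiv_var j (Var k ^ Suc n) = (if j = k then of_nat (Suc n) * Var k ^ n else 0)"
proof (induction n)
  case (Suc n)
  have "pderiv_var j (Var k ^ Suc (Suc n)) =
      (if j = k then Var k ^ Suc n else 0) + Var k * pderiv_var j (Var k ^ Suc n)"
    by (simp only: power_Suc[of _ "Suc n"] pderiv_var_Var_mult)
  with Suc show ?case by (auto simp: algebra_simps)
qed (simp add: pderiv_var_Var)

lemma keys_diff_subset:
  "Poly_Mapping.keys (p - q) \<subseteq> Poly_Mapping.keys p \<union> Poly_Mapping.keys (q :: 'a \<Rightarrow>\<^sub>0 'b::ab_group_add)"
  by (auto simp: in_keys_iff lookup_minus)

lemma inR_0: "inR 0"
  unfolding inR_def by simp

lemma inR_add: "inR p \<Longrightarrow> inR q \<Longrightarrow> inR (p + q)"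
  unfolding inR_def using keys_add[of p q] by blast

lemma inR_diff: "inR p \<Longrightarrow> inR q \<Longrightarrow> inR (p - q)"
  unfolding inR_def using keys_diff_subset[of p q] by blast

lemma inR_uminus: "inR p \<Longrightarrow> inR (- p)"
  unfolding inR_def by simp

lemma inR_mult:
  assumes "inR p" "inR q"
  shows "inR (p * q)"
  unfolding inR_def
proof
  fix m
  assume "m \<in> Poly_Mapping.keys (p * q)"
  then obtain a b where "m = a + b" "a \<in> Poly_Mapping.keys p" "b \<in> Poly_Mapping.keys q"
    using keys_mult[of p q] by blast
  then show "Poly_Mapping.keys m \<subseteq> {0..3}"
    using keys_add[of a b] assms unfolding inR_def by blast
qed

lemma inR_single: "Poly_Mapping.keys a \<subseteq> {0..3} \<Longrightarrow> inR (Poly_Mapping.single a b)"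
  unfolding inR_def by simp

lemma inR_Var: "i \<le> 3 \<Longrightarrow> inR (Var i)"
  unfolding Var_def by (rule inR_single) simp

lemma inR_power: "inR p \<Longrightarrow> inR (p ^ n)"
  by (induction n) (simp_all add: inR_mult, simp add: inR_def)

lemma inR_sum: "(\<And>x. x \<in> A \<Longrightarrow> inR (f x)) \<Longrightarrow> inR (sum f A)"
  by (induction A rule: infinite_finite_induct) (auto intro: inR_0 inR_add)

definition free_of :: "nat \<Rightarrow> mpoly \<Rightarrow> bool" where
  "free_of j p \<longleftrightarrow> (\<forall>m \<in> Poly_Mapping.keys p. Poly_Mapping.lookup m j = 0)"

lemma free_of_0: "free_of j 0"
  unfolding free_of_def by simp

lemma free_of_add: "free_of j p \<Longrightarrow> free_of j q \<Longrightarrow> free_of j (p + q)"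
  unfolding free_of_def using keys_add[of p q] by blast

lemma free_of_diff: "free_of j p \<Longrightarrow> free_of j q \<Longrightarrow> free_of j (p - q)"
  unfolding free_of_def using keys_diff_subset[of p q] by blast

lemma free_of_mult:
  assumes "free_of j p" "free_of j q"
  shows "free_of j (p * q)"
  unfolding free_of_def
proof
  fix m
  assume "m \<in> Poly_Mapping.keys (p * q)"
  then obtain a b where "m = a + b" "a \<in> Poly_Mapping.keys p" "b \<in> Poly_Mapping.keys q"
    using keys_mult[of p q] by blast
  then show "Poly_Mapping.lookup m j = 0"
    using assms unfolding free_of_def by (simp add: lookup_add)
qed

lemma free_of_Var: "i \<noteq> j \<Longrightarrow> free_of j (Var i)"
  unfolding free_of_def Var_def by (simp add: lookup_single)

text \<open>Look at a monomial \<open>m\<close> of \<open>K\<close> of maximal degree in \<open>j\<close>: the coefficient of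
  \<open>m + unit_monom j\<close> in \<open>(Var i - Var j) * K\<close> is \<open>- K m \<noteq> 0\<close>.\<close>
lemma free_of_Var_diff_mult_imp_0:
  assumes "i \<noteq> j" and "free_of j ((Var i - Var j) * K)"
  shows "K = 0"
proof (rule ccontr)
  assume "K \<noteq> 0"
  define deg where "deg m = Poly_Mapping.lookup m j" for m :: "nat \<Rightarrow>\<^sub>0 nat"
  have fin: "finite (deg ` Poly_Mapping.keys K)" and ne: "deg ` Poly_Mapping.keys K \<noteq> {}"
    using \<open>K \<noteq> 0\<close> by simp_all
  obtain m where m: "m \<in> Poly_Mapping.keys K" "deg m = Max (deg ` Poly_Mapping.keys K)"
    using Max_in[OF fin ne] by auto
  have max: "deg m' \<le> deg m" if "m' \<in> Poly_Mapping.keys K" for m'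
    using that fin m(2) by simp
  have "deg (m + unit_monom j - unit_monom i) = deg m + 1"
    using \<open>i \<noteq> j\<close> by (simp add: deg_def lookup_add lookup_minus_nat lookup_single)
  then have "Poly_Mapping.lookup K (m + unit_monom j - unit_monom i) = 0"
    using max by (fastforce simp: in_keys_iff)
  then have "Poly_Mapping.lookup (Var i * K) (m + unit_monom j) = 0"
    by (simp add: lookup_Var_mult)
  then have "Poly_Mapping.lookup ((Var i - Var j) * K) (m + unit_monom j) = - Poly_Mapping.lookup K m"
    by (simp only: left_diff_distrib lookup_minus lookup_Var_mult_add_unit_monom)
  then have "m + unit_monom j \<in> Poly_Mapping.keys ((Var i - Var j) * K)"
    using m(1) by (simp add: in_keys_iff)
  then have "Poly_Mapping.lookup (m + unit_monom j) j = 0"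
    using assms(2) unfolding free_of_def by blast
  then show False
    by (simp add: lookup_add)
qed

lemma Var_power_eq_Var_power_add:
  assumes "i \<le> 3" "j \<le> 3"
  shows "\<exists>h. inR h \<and> Var j ^ k = Var i ^ k + (Var j - Var i) * h"
proof (induction k)
  case 0
  then show ?case using inR_0 by auto
next
  case (Suc k)
  then obtain h where h: "inR h" "Var j ^ k = Var i ^ k + (Var j - Var i) * h"
    by blast
  have "Var j ^ Suc k = Var j * (Var i ^ k + (Var j - Var i) * h)"
    using h(2) by simp
  also have "\<dots> = Var i ^ Suc k + (Var j - Var i) * (Var i ^ k + Var j * h)"
    by (simp add: algebra_simps)
  finally have "Var j ^ Suc k = \<dots>" .
  moreover have "inR (Var i ^ k + Var j * h)"
    using h(1) assms by (intro inR_add inR_mult inR_power inR_Var)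
  ultimately show ?case by blast
qed

lemma single_div_Var_diff:
  assumes "Poly_Mapping.keys a \<subseteq> {0..3}" "i \<le> 3" "j \<le> 3" "i \<noteq> j"
  shows "\<exists>q r. Poly_Mapping.single a b = (Var i - Var j) * q + r \<and> inR q \<and> free_of j r"
proof -
  define k where "k = Poly_Mapping.lookup a j"
  define a' where "a' = a - Poly_Mapping.single j k"
  have a: "a = a' + Poly_Mapping.single j k"
    unfolding a'_def k_def
    by (intro poly_mapping_eqI) (auto simp: lookup_add lookup_minus_nat lookup_single when_def)
  have "Poly_Mapping.keys a' \<subseteq> {0..3}"
    using assms(1) unfolding a'_def by (auto simp: in_keys_iff lookup_minus_nat)
  then have a'R: "inR (Poly_Mapping.single a' b)"
    by (rule inR_single)
  obtain h where h: "inR h" "Var j ^ k = Var i ^ k + (Var j - Var i) * h"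
    using Var_power_eq_Var_power_add assms(2,3) by blast
  have "Poly_Mapping.single a b = Poly_Mapping.single a' b * Var j ^ k"
    by (subst a) (simp add: Var_power mult_single)
  also have "\<dots> = (Var i - Var j) * (- (Poly_Mapping.single a' b * h))
      + Poly_Mapping.single a' b * Var i ^ k"
    unfolding h(2) by (simp add: algebra_simps)
  finally have "Poly_Mapping.single a b = \<dots>" .
  moreover have "inR (- (Poly_Mapping.single a' b * h))"
    using a'R h(1) by (intro inR_uminus inR_mult)
  moreover have "free_of j (Poly_Mapping.single a' b * Var i ^ k)"
    using assms(4) unfolding Var_power free_of_def a'_def k_def
    by (simp add: mult_single lookup_add lookup_minus_nat lookup_single)
  ultimately show ?thesis by blast
qed

lemma div_Var_diff:
  assumes "inR p" "i \<le> 3" "j \<le> 3" "i \<noteq> j"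
  shows "\<exists>q r. p = (Var i - Var j) * q + r \<and> inR q \<and> free_of j r"
  using assms(1)
proof (induction p rule: poly_mapping_single_add_induct)
  case zero
  then show ?case using inR_0 free_of_0 by (intro exI[of _ 0]) simp
next
  case (single_add f a b)
  have "a \<in> Poly_Mapping.keys (Poly_Mapping.single a b + f)"
    and "Poly_Mapping.keys f \<subseteq> Poly_Mapping.keys (Poly_Mapping.single a b + f)"
    using single_add.hyps(1,2) by (auto simp: in_keys_iff lookup_add lookup_single when_def)
  then have a: "Poly_Mapping.keys a \<subseteq> {0..3}" and "inR f"
    using single_add.prems unfolding inR_def by blast+
  obtain q1 r1 where 1: "Poly_Mapping.single a b = (Var i - Var j) * q1 + r1" "inR q1" "free_of j r1"
    using single_div_Var_diff[OF a assms(2-4)] by blast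
  obtain q2 r2 where 2: "f = (Var i - Var j) * q2 + r2" "inR q2" "free_of j r2"
    using single_add.IH[OF \<open>inR f\<close>] by blast
  have "Poly_Mapping.single a b + f = (Var i - Var j) * (q1 + q2) + (r1 + r2)"
    unfolding 1(1) 2(1) by (simp add: algebra_simps)
  then show ?case using 1 2 inR_add free_of_add by blast
qed

lemma w2_mult_Var_diff: "w2 N * (Var 3 - Var 1) = Var 3 ^ Suc N - Var 1 ^ Suc N"
  using diff_power_eq_sum[of "Var 3" N "Var 1"]
  by (simp add: w2_def lessThan_Suc_atMost mult.commute)

lemma inR_w2: "inR (w2 N)"
  unfolding w2_def by (intro inR_sum inR_mult inR_power inR_Var) auto

lemma pderiv_var_2_w2: "pderiv_var 2 (w2 N) = 0"
proof -
  have "Var 3 * w2 N - Var 1 * w2 N = Var 3 ^ Suc N - Var 1 ^ Suc N"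
    using w2_mult_Var_diff[of N] by (simp add: algebra_simps)
  from arg_cong[OF this, of "pderiv_var 2"]
  have "pderiv_var 2 (w2 N) * (Var 3 - Var 1) = 0"
    by (simp only: pderiv_var_diff pderiv_var_Var_mult pderiv_var_Var_power) (simp add: algebra_simps)
  then show ?thesis
    using Var_diff_neq_0[of 3 1] by simp
qed

lemma pderiv_var_3_w2:
  "w2 N + (Var 3 - Var 1) * pderiv_var 3 (w2 N) = of_nat (Suc N) * Var 3 ^ N"
proof -
  have "Var 3 * w2 N - Var 1 * w2 N = Var 3 ^ Suc N - Var 1 ^ Suc N"
    using w2_mult_Var_diff[of N] by (simp add: algebra_simps)
  from arg_cong[OF this, of "pderiv_var 3"] show ?thesis
    by (simp only: pderiv_var_diff pderiv_var_Var_mult pderiv_var_Var_power) (simp add: algebra_simps)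
qed

text \<open>Multiplied by \<open>y2 - x2\<close>, the remainder of \<open>u1 + y1 u2 - w2\<close> on division by \<open>x1 - y1\<close>
  becomes divisible by \<open>x1 - y1\<close>; being free of \<open>y1\<close>, it must vanish.\<close>
lemma x1_minus_y1_divides:
  assumes H: "Var 2 ^ (N+1) + Var 3 ^ (N+1) - Var 0 ^ (N+1) - Var 1 ^ (N+1)
      = u1 * (Var 2 + Var 3 - Var 0 - Var 1) + u2 * (Var 2 * Var 3 - Var 0 * Var 1)"
    and "inR u1" "inR u2"
  shows "\<exists>q. inR q \<and> u1 + Var 2 * u2 - w2 N = (Var 0 - Var 2) * q"
proof -
  define E where "E = u1 + Var 2 * u2 - w2 N"
  obtain g where g: "Var 2 ^ Suc N - Var 0 ^ Suc N = (Var 2 - Var 0) * g"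
    using diff_power_eq_sum by blast
  have "w2 N * (Var 3 - Var 1) = (Var 2 ^ Suc N + Var 3 ^ Suc N - Var 0 ^ Suc N - Var 1 ^ Suc N)
      - (Var 2 ^ Suc N - Var 0 ^ Suc N)"
    unfolding w2_mult_Var_diff by (simp add: algebra_simps)
  also have "\<dots> = u1 * (Var 2 + Var 3 - Var 0 - Var 1) + u2 * (Var 2 * Var 3 - Var 0 * Var 1)
      - (Var 2 - Var 0) * g"
    using H by (simp only: g[unfolded Suc_eq_plus1] Suc_eq_plus1)
  finally have "E * (Var 3 - Var 1) = (Var 0 - Var 2) * (u1 + Var 1 * u2 - g)"
    unfolding E_def by algebra
  moreover have "inR E"
    unfolding E_def using assms(2,3) by (intro inR_diff inR_add inR_mult inR_Var inR_w2) auto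
  then obtain q r where qr: "E = (Var 0 - Var 2) * q + r" "inR q" "free_of 2 r"
    using div_Var_diff[of E 0 2] by auto
  ultimately have r:
      "r * (Var 3 - Var 1) = (Var 0 - Var 2) * (u1 + Var 1 * u2 - g - q * (Var 3 - Var 1))"
    by algebra
  moreover have "free_of 2 (r * (Var 3 - Var 1))"
    using qr(3) by (intro free_of_mult free_of_diff free_of_Var) auto
  ultimately have "free_of 2 ((Var 0 - Var 2) * (u1 + Var 1 * u2 - g - q * (Var 3 - Var 1)))"
    by simp
  then have "u1 + Var 1 * u2 - g - q * (Var 3 - Var 1) = 0"
    by (rule free_of_Var_diff_mult_imp_0[rotated]) simp
  with r have "r = 0"
    using Var_diff_neq_0[of 3 1] by simp
  with qr show ?thesis
    unfolding E_def by auto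
qed

text \<open>The paper's \<open>\<Omega>\<^sub>2\<close> is the inverse of this operator.\<close>
definition Omega_inv :: "mpoly \<Rightarrow> mpoly" where
  "Omega_inv z = 2 * z + pderiv_var 2 z * (Var 2 - Var 0) + pderiv_var 3 z * (Var 3 - Var 1)"

lemma Omega_inv_diff: "Omega_inv (z - z') = Omega_inv z - Omega_inv z'"
  unfolding Omega_inv_def by (simp add: pderiv_var_diff algebra_simps)

text \<open>On a monomial \<open>m\<close> of \<open>z\<close> of maximal total degree in \<open>y1, y2\<close>, \<open>Omega_inv\<close> acts as
  multiplication by \<open>2 + deg m\<close>: the terms \<open>- x\<^sub>k \<partial>z/\<partial>y\<^sub>k\<close> only receive contributions from
  monomials of higher degree.\<close>
lemma Omega_inv_eq_0_imp:
  assumes "Omega_inv z = 0"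
  shows "z = 0"
proof (rule ccontr)
  assume "z \<noteq> 0"
  define deg where "deg m = Poly_Mapping.lookup m 2 + Poly_Mapping.lookup m 3"
    for m :: "nat \<Rightarrow>\<^sub>0 nat"
  have fin: "finite (deg ` Poly_Mapping.keys z)" and ne: "deg ` Poly_Mapping.keys z \<noteq> {}"
    using \<open>z \<noteq> 0\<close> by simp_all
  obtain m where m: "m \<in> Poly_Mapping.keys z" "deg m = Max (deg ` Poly_Mapping.keys z)"
    using Max_in[OF fin ne] by auto
  have max: "deg m' \<le> deg m" if "m' \<in> Poly_Mapping.keys z" for m'
    using that fin m(2) by simp
  have higher: "Poly_Mapping.lookup (Var i * pderiv_var k z) m = 0"
    if "i \<in> {0, 1}" "k \<in> {2, 3}" for i k
  proof -
    have "deg (m - unit_monom i + unit_monom k) = deg m + 1" if "Poly_Mapping.lookup m i \<noteq> 0"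
      using that \<open>i \<in> _\<close> \<open>k \<in> _\<close>
      by (auto simp: deg_def lookup_add lookup_minus_nat lookup_single)
    then have "Poly_Mapping.lookup z (m - unit_monom i + unit_monom k) = 0"
      if "Poly_Mapping.lookup m i \<noteq> 0"
      using that max[of "m - unit_monom i + unit_monom k"] by (fastforce simp: in_keys_iff)
    then show ?thesis
      by (simp add: lookup_Var_mult lookup_pderiv_var)
  qed
  have "Omega_inv z = z + z + Var 2 * pderiv_var 2 z - Var 0 * pderiv_var 2 z
      + Var 3 * pderiv_var 3 z - Var 1 * pderiv_var 3 z"
    unfolding Omega_inv_def by (simp add: algebra_simps mult_2)
  then have "Poly_Mapping.lookup (Omega_inv z) m = 2 * Poly_Mapping.lookup z m
      + Poly_Mapping.lookup (Var 2 * pderiv_var 2 z) m - Poly_Mapping.lookup (Var 0 * pderiv_var 2 z) m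
      + Poly_Mapping.lookup (Var 3 * pderiv_var 3 z) m - Poly_Mapping.lookup (Var 1 * pderiv_var 3 z) m"
    by (simp only: lookup_add lookup_minus mult_2)
  also have "\<dots> = (2 + of_nat (deg m)) * Poly_Mapping.lookup z m"
    by (simp only: lookup_Var_mult_pderiv_var) (simp add: higher deg_def algebra_simps)
  finally have "Poly_Mapping.lookup (Omega_inv z) m = (2 + of_nat (deg m)) * Poly_Mapping.lookup z m"
    .
  moreover have "Poly_Mapping.lookup z m \<noteq> 0"
    using m(1) by (simp add: in_keys_iff)
  ultimately show False
    using assms by (simp add: add_pos_nonneg)
qed

lemma inj_Omega_inv: "inj Omega_inv"
  by (rule injI) (metis Omega_inv_diff Omega_inv_eq_0_imp right_minus_eq)

text \<open>The derivatives in \<open>y2\<close> of the hypothesis and in \<open>y1\<close>, \<open>y2\<close> of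
  \<open>u1 + y1 u2 - w2 = (x1 - y1) q\<close> combine to \<open>(x1 - y1) (Omega_inv (-a2) - \<gamma>) = 0\<close>.\<close>
lemma Omega_inv_a2:
  assumes H: "Var 2 ^ (N+1) + Var 3 ^ (N+1) - Var 0 ^ (N+1) - Var 1 ^ (N+1)
      = u1 * (Var 2 + Var 3 - Var 0 - Var 1) + u2 * (Var 2 * Var 3 - Var 0 * Var 1)"
    and Q: "u1 + Var 2 * u2 - w2 N = (Var 0 - Var 2) * q"
  shows "Omega_inv (- (Const (1/2) * u2 + q)) =
      pderiv_var 2 u1 - pderiv_var 3 u1
      - Const (1/2) * pderiv_var 3 u2 * (Var 1 + Var 3)
      + Const (1/2) * pderiv_var 2 u2 * (Var 0 + Var 2)"
proof -
  define h where "h = Const (1/2)"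
  have "Var 2 ^ Suc N + Var 3 ^ Suc N - Var 0 ^ Suc N - Var 1 ^ Suc N = Var 2 * u1 + Var 3 * u1
      - Var 0 * u1 - Var 1 * u1 + Var 2 * (Var 3 * u2) - Var 0 * (Var 1 * u2)"
    using H by (simp add: algebra_simps)
  from arg_cong[OF this, of "pderiv_var 3"]
  have H3: "of_nat (Suc N) * Var 3 ^ N = Var 2 * pderiv_var 3 u1 + (u1 + Var 3 * pderiv_var 3 u1)
      - Var 0 * pderiv_var 3 u1 - Var 1 * pderiv_var 3 u1 + Var 2 * (u2 + Var 3 * pderiv_var 3 u2)
      - Var 0 * (Var 1 * pderiv_var 3 u2)"
    by (simp only: pderiv_var_add pderiv_var_diff pderiv_var_Var_mult pderiv_var_Var_power) simp
  have Q': "u1 + Var 2 * u2 - w2 N = Var 0 * q - Var 2 * q"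
    using Q by (simp add: algebra_simps)
  from arg_cong[OF Q', of "pderiv_var 2"]
  have Q2: "pderiv_var 2 u1 + (u2 + Var 2 * pderiv_var 2 u2)
      = Var 0 * pderiv_var 2 q - (q + Var 2 * pderiv_var 2 q)"
    by (simp add: pderiv_var_add pderiv_var_diff pderiv_var_Var_mult pderiv_var_2_w2)
  from arg_cong[OF Q', of "pderiv_var 3"]
  have Q3: "pderiv_var 3 u1 + Var 2 * pderiv_var 3 u2 - pderiv_var 3 (w2 N)
      = Var 0 * pderiv_var 3 q - Var 2 * pderiv_var 3 q"
    by (simp add: pderiv_var_add pderiv_var_diff pderiv_var_Var_mult)
  have "(Var 0 - Var 2) * (Omega_inv (- (h * u2 + q)) - (pderiv_var 2 u1 - pderiv_var 3 u1
      - h * pderiv_var 3 u2 * (Var 1 + Var 3) + h * pderiv_var 2 u2 * (Var 0 + Var 2))) = 0"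
    unfolding Omega_inv_def h_def pderiv_var_uminus pderiv_var_add pderiv_var_Const_mult
    using Const_half_add_Const_half H3[folded pderiv_var_3_w2] Q2 Q3 Q' by algebra
  then show ?thesis
    using Var_diff_neq_0[of 0 2] unfolding h_def by simp
qed

theorem lemmaA5:
  fixes N :: nat and u1 u2 :: mpoly
  assumes "N > 0"
    and "inR u1" and "inR u2"
    and "homogeneous u1" and "homogeneous u2"
    and "Var 2 ^ (N+1) + Var 3 ^ (N+1) - Var 0 ^ (N+1) - Var 1 ^ (N+1)
           = u1 * (Var 2 + Var 3 - Var 0 - Var 1) + u2 * (Var 2 * Var 3 - Var 0 * Var 1)"
    and "swap_xy u1 = u1" and "swap_xy u2 = u2"
  defines "\<gamma> \<equiv> pderiv_var 2 u1 - pderiv_var 3 u1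
                 - Const (1/2) * pderiv_var 3 u2 * (Var 1 + Var 3)
                 + Const (1/2) * pderiv_var 2 u2 * (Var 0 + Var 2)"
  shows "(\<exists>q. inR q \<and> u1 + Var 2 * u2 - w2 N = (Var 0 - Var 2) * q)
       \<and> (\<forall>q. inR q \<and> u1 + Var 2 * u2 - w2 N = (Var 0 - Var 2) * q \<longrightarrow>
            (\<forall>z. inR z \<longrightarrow>
               (2 * z + pderiv_var 2 z * (Var 2 - Var 0) + pderiv_var 3 z * (Var 3 - Var 1) = \<gamma>
                \<longleftrightarrow> z = - (Const (1/2) * u2 + q))))"
proof (intro conjI allI impI)
  show "\<exists>q. inR q \<and> u1 + Var 2 * u2 - w2 N = (Var 0 - Var 2) * q"
    using x1_minus_y1_divides assms(2,3,6) by blast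
next
  fix q z
  assume "inR q \<and> u1 + Var 2 * u2 - w2 N = (Var 0 - Var 2) * q"
  then have "Omega_inv (- (Const (1/2) * u2 + q)) = \<gamma>"
    unfolding \<gamma>_def using Omega_inv_a2 assms(6) by blast
  then show "2 * z + pderiv_var 2 z * (Var 2 - Var 0) + pderiv_var 3 z * (Var 3 - Var 1) = \<gamma>
      \<longleftrightarrow> z = - (Const (1/2) * u2 + q)"
    using inj_Omega_inv unfolding Omega_inv_def inj_def by metis
qed

end
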